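(* Let $U_0, c_0, \rho_0 > 0$ and $\omega_f \in \mathbb{R}$ be constants and let $h$ be the Heaviside function. Let $f_1,\dots,f_4:\mathbb{R}\to\mathbb{R}$ be continuously differentiable, and $k_i,l_i,m_i$ ($i=1,\dots,4$) real numbers with $k_3k_4\neq 0$. Write $r_i = \sqrt{k_i^2+l_i^2+m_i^2}$, $\xi_i = k_ix+l_iy+m_iz$, and for $0\le\tau\le t$ set $a_1 = f_1[\xi_1 - (k_1U_0 - c_0r_1)(t-\tau)]$, $a_2 = f_2[\xi_2 - (k_2U_0+c_0r_2)(t-\tau)]$, $a_3 = f_3[\xi_3 - k_3U_0(t-\tau)]$, $a_4 = f_4[\xi_4 - k_4U_0(t-\tau)]$. Define $$v_x' = h(t)\int_0^t\Big(k_1 a_1 + k_2 a_2 + \tfrac{l_3}{k_3}a_3 + \tfrac{m_4}{k_4}a_4\Big)\sin\omega_f\tau\,d\tau,\quad v_y' = h(t)\int_0^t (l_1a_1 + l_2a_2 - a_3)\sin\omega_f\tau\,d\tau,$$ $$v_z' = h(t)\int_0^t (m_1a_1+m_2a_2-a_4)\sin\omega_f\tau\,d\tau,\quad p' = h(t)\int_0^t(-c_0\rho_0r_1a_1 + c_0\rho_0 r_2 a_2)\sin\omega_f\tau\,d\tau.$$ Then $(v_x',v_y',v_z',p')$ satisfies pointwise the system $$\partial_t v_x' + U_0\partial_x v_x' + \tfrac1{\rho_0}\partial_x p' = h(t)F\sin\omega_f t,\quad \partial_t v_y' + U_0\partial_x v_y' + \tfrac1{\rho_0}\partial_y p' = h(t)G\sin\omega_f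 t,$$ $$\partial_t v_z' + U_0\partial_x v_z' + \tfrac1{\rho_0}\partial_z p' = h(t)H\sin\omega_f t,\quad \partial_t p' + U_0\partial_x p' + \rho_0c_0^2(\partial_xv_x'+\partial_yv_y'+\partial_zv_z') = h(t)P\sin\omega_f t,$$ where $F = k_1f_1(\xi_1)+k_2f_2(\xi_2)+\frac{l_3}{k_3}f_3(\xi_3)+\frac{m_4}{k_4}f_4(\xi_4)$, $G = l_1f_1(\xi_1)+l_2f_2(\xi_2)-f_3(\xi_3)$, $H = m_1f_1(\xi_1)+m_2f_2(\xi_2)-f_4(\xi_4)$, $P = -c_0\rho_0r_1f_1(\xi_1)+c_0\rho_0r_2f_2(\xi_2)$.
   Context: This is the linearized 3D Euler system at a uniform flow $(U_0,0,0)$ forced by a permanent time-harmonic source with amplitude $(F,G,H,P)$ switched on at $t=0$. *)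

theory Defs
  imports "HOL-Analysis.Analysis"
begin

text \<open>Heaviside function (the value at 0 is irrelevant for the statement, since all
  fields vanish at t = 0 and the right-hand sides vanish there too).\<close>
definition heaviside :: "real \<Rightarrow> real" where
  "heaviside t = (if t \<ge> 0 then 1 else 0)"

definition has_pd_t :: "(real \<Rightarrow> real \<Rightarrow> real \<Rightarrow> real \<Rightarrow> real) \<Rightarrow> real \<Rightarrow> real \<Rightarrow> real \<Rightarrow> real \<Rightarrow> real \<Rightarrow> bool" where
  "has_pd_t u t x y z D \<longleftrightarrow> ((\<lambda>s. u s x y z) has_real_derivative D) (at t)"
definition has_pd_x :: "(real \<Rightarrow> real \<Rightarrow> real \<Rightarrow> real \<Rightarrow> real) \<Rightarrow> real \<Rightarrow> real \<Rightarrow> real \<Rightarrow> real \<Rightarrow> real \<Rightarrow> bool" where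
  "has_pd_x u t x y z D \<longleftrightarrow> ((\<lambda>s. u t s y z) has_real_derivative D) (at x)"
definition has_pd_y :: "(real \<Rightarrow> real \<Rightarrow> real \<Rightarrow> real \<Rightarrow> real) \<Rightarrow> real \<Rightarrow> real \<Rightarrow> real \<Rightarrow> real \<Rightarrow> real \<Rightarrow> bool" where
  "has_pd_y u t x y z D \<longleftrightarrow> ((\<lambda>s. u t x s z) has_real_derivative D) (at y)"
definition has_pd_z :: "(real \<Rightarrow> real \<Rightarrow> real \<Rightarrow> real \<Rightarrow> real) \<Rightarrow> real \<Rightarrow> real \<Rightarrow> real \<Rightarrow> real \<Rightarrow> real \<Rightarrow> bool" where
  "has_pd_z u t x y z D \<longleftrightarrow> ((\<lambda>s. u t x y s) has_real_derivative D) (at z)"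

end

theory Submission
  imports Defs
begin

text \<open>Every field is a superposition of four plane waves \<open>W\<^sub>i(t, k\<^sub>i x + l\<^sub>i y + m\<^sub>i z)\<close>, where
  \<open>W(t,\<xi>) = \<integral>\<^sub>0\<^sup>t f(\<xi> - s(t-\<tau>)) sin(\<omega>\<tau>) d\<tau>\<close> is Duhamel's solution of the forced transport
  equation \<open>W\<^sub>t + s W\<^sub>\<xi> = h(t) f(\<xi>) sin(\<omega>t)\<close>. A plane wave with amplitudes \<open>(a,b,c,d)\<close> and
  speed \<open>s\<close> solves the linearized Euler system with forcing \<open>(a,b,c,d) h(t) f(\<xi>) sin(\<omega>t)\<close>
  whenever \<open>s\<close> and \<open>(a,b,c,d)\<close> satisfy the dispersion relation; the four waves of the
  statement are the two acoustic modes, of speeds \<open>k U\<^sub>0 \<mp> c\<^sub>0 r\<close>, and two vortical modes of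
  speed \<open>k U\<^sub>0\<close>. The transport equation itself is proved after the substitution
  \<open>u = t - \<tau>\<close>: expanding \<open>sin(\<omega>(t-u))\<close> moves all dependence on \<open>t\<close> out of the integrands,
  and an integration by parts turns \<open>s \<partial>\<^sub>\<xi>\<close> into \<open>-\<partial>\<^sub>u\<close>.\<close>

lemma has_real_derivative_from_halflines:
  fixes F :: "real \<Rightarrow> real"
  assumes right: "\<And>t. a \<le> t \<Longrightarrow> (F has_real_derivative D t) (at t within {a..})"
    and left: "\<And>t. t \<le> a \<Longrightarrow> (F has_real_derivative D t) (at t within {..a})"
  shows "(F has_real_derivative D t) (at t)"
proof (cases t a rule: linorder_cases)
  case less
  then have "at t within {..a} = at t"
    by (intro at_within_interior) simp
  with left[of t] less show ?thesis by simp
next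
  case equal
  then show ?thesis
    using left[of t] right[of t] unfolding has_field_derivative_iff
    by (intro Lim_Un_univ[where S="{..a}" and T="{a..}"]) auto
next
  case greater
  then have "at t within {a..} = at t"
    by (intro at_within_interior) simp
  with right[of t] greater show ?thesis by simp
qed

lemma integral_atLeastAtMost_degenerate: "b \<le> a \<Longrightarrow> integral {a..b::real} f = 0"
  by (rule integral_null[of a b, unfolded cbox_interval content_real_eq_0])

lemma has_real_derivative_integral_upper_right:
  fixes g :: "real \<Rightarrow> real"
  assumes "continuous_on {a..} g" "a \<le> t"
  shows "((\<lambda>u. integral {a..u} g) has_real_derivative g t) (at t within {a..})"
proof -
  have "((\<lambda>u. integral {a..u} g) has_real_derivative g t) (at t within {a..t+1})"
    using assms by (intro integral_has_real_derivative) (auto intro: continuous_on_subset)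
  moreover have "at t within {a..t+1} = at t within {a..}"
    by (rule at_within_nhd[where S="{..<t+1}"]) auto
  ultimately show ?thesis by simp
qed

lemma has_real_derivative_integral_upper_left:
  fixes g :: "real \<Rightarrow> real"
  assumes "t \<le> a"
  shows "((\<lambda>u. integral {a..u} g) has_real_derivative 0) (at t within {..a})"
  by (rule has_field_derivative_transform_within[where f="\<lambda>_. 0" and d=1])
    (use assms in \<open>auto simp: integral_atLeastAtMost_degenerate\<close>)

lemma integral_reflect_interval:
  fixes h :: "real \<Rightarrow> 'a::banach"
  shows "integral {a..b} (\<lambda>x. h (a + b - x)) = integral {a..b} h"
proof -
  have "integral {-b - c..-a - c} (\<lambda>x. h (- (x + c))) = integral {-b..-a} (\<lambda>x. h (-x))"
    for c by (rule integral_shift_real_ivl)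
  from this[of "-(a+b)"] show ?thesis by (simp add: algebra_simps)
qed

lemma sine_convolution_expand:
  fixes g :: "real \<Rightarrow> real"
  assumes "continuous_on {a..t} g"
  shows "integral {a..t} (\<lambda>u. g u * sin (\<omega>*(t-u))) =
      sin (\<omega>*t) * integral {a..t} (\<lambda>u. g u * cos (\<omega>*u))
      - cos (\<omega>*t) * integral {a..t} (\<lambda>u. g u * sin (\<omega>*u))"
    and "integral {a..t} (\<lambda>u. g u * cos (\<omega>*(t-u))) =
      cos (\<omega>*t) * integral {a..t} (\<lambda>u. g u * cos (\<omega>*u))
      + sin (\<omega>*t) * integral {a..t} (\<lambda>u. g u * sin (\<omega>*u))"
proof -
  have int: "(\<lambda>u. c * (g u * cos (\<omega>*u))) integrable_on {a..t}"
    "(\<lambda>u. c * (g u * sin (\<omega>*u))) integrable_on {a..t}" for c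
    using assms by (intro integrable_continuous_real continuous_intros; assumption)+
  have "(\<lambda>u. g u * sin (\<omega>*(t-u))) =
      (\<lambda>u. sin (\<omega>*t) * (g u * cos (\<omega>*u)) - cos (\<omega>*t) * (g u * sin (\<omega>*u)))"
    "(\<lambda>u. g u * cos (\<omega>*(t-u))) =
      (\<lambda>u. cos (\<omega>*t) * (g u * cos (\<omega>*u)) + sin (\<omega>*t) * (g u * sin (\<omega>*u)))"
    by (auto simp: sin_diff cos_diff algebra_simps)
  then show "integral {a..t} (\<lambda>u. g u * sin (\<omega>*(t-u))) =
      sin (\<omega>*t) * integral {a..t} (\<lambda>u. g u * cos (\<omega>*u))
      - cos (\<omega>*t) * integral {a..t} (\<lambda>u. g u * sin (\<omega>*u))"
    and "integral {a..t} (\<lambda>u. g u * cos (\<omega>*(t-u))) =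
      cos (\<omega>*t) * integral {a..t} (\<lambda>u. g u * cos (\<omega>*u))
      + sin (\<omega>*t) * integral {a..t} (\<lambda>u. g u * sin (\<omega>*u))"
    by (simp_all add: integral_diff integral_add int)
qed

lemma has_real_derivative_sine_convolution:
  fixes g :: "real \<Rightarrow> real"
  assumes "continuous_on UNIV g"
  shows "((\<lambda>t. integral {a..t} (\<lambda>u. g u * sin (\<omega>*(t-u)))) has_real_derivative
      \<omega> * integral {a..t} (\<lambda>u. g u * cos (\<omega>*(t-u)))) (at t)"
proof -
  define C S where "C t = integral {a..t} (\<lambda>u. g u * cos (\<omega>*u))"
    and "S t = integral {a..t} (\<lambda>u. g u * sin (\<omega>*u))" for t
  have cont: "continuous_on A (\<lambda>u. g u * cos (\<omega>*u))" "continuous_on A (\<lambda>u. g u * sin (\<omega>*u))" for A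
    by (intro continuous_intros continuous_on_subset[OF assms] subset_UNIV)+
  have "((\<lambda>t. sin (\<omega>*t) * C t - cos (\<omega>*t) * S t) has_real_derivative
      \<omega> * (cos (\<omega>*t) * C t + sin (\<omega>*t) * S t)) (at t)"
  proof (rule has_real_derivative_from_halflines)
    fix t assume "a \<le> t"
    then have "(C has_real_derivative g t * cos (\<omega>*t)) (at t within {a..})"
      "(S has_real_derivative g t * sin (\<omega>*t)) (at t within {a..})"
      unfolding C_def S_def by (auto intro!: has_real_derivative_integral_upper_right cont)
    then show "((\<lambda>t. sin (\<omega>*t) * C t - cos (\<omega>*t) * S t) has_real_derivative
        \<omega> * (cos (\<omega>*t) * C t + sin (\<omega>*t) * S t)) (at t within {a..})"
      by (auto intro!: derivative_eq_intros simp: algebra_simps)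
  next
    fix t assume "t \<le> a"
    then have "(C has_real_derivative 0) (at t within {..a})" "(S has_real_derivative 0) (at t within {..a})"
      unfolding C_def S_def by (auto intro!: has_real_derivative_integral_upper_left)
    then show "((\<lambda>t. sin (\<omega>*t) * C t - cos (\<omega>*t) * S t) has_real_derivative
        \<omega> * (cos (\<omega>*t) * C t + sin (\<omega>*t) * S t)) (at t within {..a})"
      by (auto intro!: derivative_eq_intros simp: algebra_simps)
  qed
  then show ?thesis
    using assms by (simp add: sine_convolution_expand continuous_on_subset C_def S_def)
qed

lemma sine_convolution_integration_by_parts:
  fixes g g' :: "real \<Rightarrow> real"
  assumes g': "\<And>u. (g has_real_derivative g' u) (at u)" and "a \<le> t"
  shows "integral {a..t} (\<lambda>u. g' u * sin (\<omega>*(t-u))) =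
      \<omega> * integral {a..t} (\<lambda>u. g u * cos (\<omega>*(t-u))) - g a * sin (\<omega>*(t-a))"
proof -
  have "((\<lambda>u. g' u * sin (\<omega>*(t-u)) - \<omega> * (g u * cos (\<omega>*(t-u)))) has_integral
      g t * sin (\<omega>*(t-t)) - g a * sin (\<omega>*(t-a))) {a..t}"
  proof (rule fundamental_theorem_of_calculus[OF \<open>a \<le> t\<close>])
    fix u
    have "((\<lambda>u. g u * sin (\<omega>*(t-u))) has_real_derivative
        g' u * sin (\<omega>*(t-u)) - \<omega> * (g u * cos (\<omega>*(t-u)))) (at u within {a..t})"
      by (auto intro!: derivative_eq_intros DERIV_subset[OF g'] simp: algebra_simps)
    then show "((\<lambda>u. g u * sin (\<omega>*(t-u))) has_vector_derivative
        g' u * sin (\<omega>*(t-u)) - \<omega> * (g u * cos (\<omega>*(t-u)))) (at u within {a..t})"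
      by (simp add: has_real_derivative_iff_has_vector_derivative)
  qed
  moreover have "continuous_on UNIV g"
    using g' by (meson DERIV_isCont continuous_at_imp_continuous_on)
  then have "((\<lambda>u. \<omega> * (g u * cos (\<omega>*(t-u)))) has_integral
      \<omega> * integral {a..t} (\<lambda>u. g u * cos (\<omega>*(t-u)))) {a..t}"
    by (intro has_integral_mult_right integrable_integral integrable_continuous_real continuous_intros)
      (auto intro: continuous_on_subset)
  ultimately have "((\<lambda>u. g' u * sin (\<omega>*(t-u))) has_integral
      \<omega> * integral {a..t} (\<lambda>u. g u * cos (\<omega>*(t-u))) - g a * sin (\<omega>*(t-a))) {a..t}"
    by (auto dest: has_integral_add)
  then show ?thesis by (rule integral_unique)
qed

lemma has_real_derivative_integral_translates:
  fixes f f' k :: "real \<Rightarrow> real"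
  assumes f': "\<And>v. (f has_real_derivative f' v) (at v)" and "continuous_on UNIV f'"
    and "continuous_on {a..b} k"
  shows "((\<lambda>\<xi>. integral {a..b} (\<lambda>u. f (\<xi> - s*u) * k u)) has_real_derivative
      integral {a..b} (\<lambda>u. f' (\<xi> - s*u) * k u)) (at \<xi>)"
proof (rule leibniz_rule_field_derivative[where U=UNIV and f="\<lambda>\<xi> u. f (\<xi> - s*u) * k u"
      and fx="\<lambda>\<xi> u. f' (\<xi> - s*u) * k u", unfolded cbox_interval, simplified])
  have "continuous_on UNIV f"
    using f' by (meson DERIV_isCont continuous_at_imp_continuous_on)
  then show "(\<lambda>u. f (x - s*u) * k u) integrable_on {a..b}" for x
    using assms by (auto intro!: integrable_continuous_real continuous_intros
        continuous_on_compose2[of UNIV f])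
  show "((\<lambda>x. f (x - s*u) * k u) has_real_derivative f' (x - s*u) * k u) (at x)" for x u
    by (auto intro!: derivative_eq_intros DERIV_chain2[OF f'])
  show "continuous_on (UNIV \<times> {a..b}) (\<lambda>(x, u). f' (x - s*u) * k u)"
    using assms by (auto intro!: continuous_intros continuous_on_compose2[of UNIV f']
        continuous_on_compose2[of "{a..b}" k] simp: split_beta)
qed

text \<open>There is no Heaviside factor: for \<open>t < 0\<close> the interval \<open>{0..t}\<close> is empty.\<close>

definition duhamel_transport :: "(real \<Rightarrow> real) \<Rightarrow> real \<Rightarrow> real \<Rightarrow> real \<Rightarrow> real \<Rightarrow> real" where
  "duhamel_transport f s \<omega> t \<xi> = integral {0..t} (\<lambda>\<tau>. f (\<xi> - s*(t-\<tau>)) * sin (\<omega>*\<tau>))"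

lemma duhamel_transport_convolution:
  "duhamel_transport f s \<omega> t \<xi> = integral {0..t} (\<lambda>u. f (\<xi> - s*u) * sin (\<omega>*(t-u)))"
  using integral_reflect_interval[of 0 t "\<lambda>u. f (\<xi> - s*u) * sin (\<omega>*(t-u))"]
  by (simp add: duhamel_transport_def)

lemma heaviside_mult_integral: "heaviside t * integral {0..t} g = integral {0..t} g"
  by (simp add: heaviside_def integral_atLeastAtMost_degenerate)

lemma duhamel_transport_equation:
  assumes "f C1_differentiable_on UNIV"
  obtains D where "(duhamel_transport f s \<omega> t has_real_derivative D) (at \<xi>)"
    and "((\<lambda>t. duhamel_transport f s \<omega> t \<xi>) has_real_derivative
      heaviside t * f \<xi> * sin (\<omega>*t) - s * D) (at t)"
proof -
  obtain f' where f': "\<And>v. (f has_real_derivative f' v) (at v)" and "continuous_on UNIV f'"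
    using assms by (auto simp: C1_differentiable_on_def has_real_derivative_iff_has_vector_derivative)
  have "continuous_on UNIV f"
    using f' by (meson DERIV_isCont continuous_at_imp_continuous_on)
  then have "continuous_on UNIV (\<lambda>u. f (\<xi> - s*u))"
    by (rule continuous_on_compose2) (auto intro: continuous_intros)
  define D where "D = integral {0..t} (\<lambda>u. f' (\<xi> - s*u) * sin (\<omega>*(t-u)))"
  define E where "E = integral {0..t} (\<lambda>u. f (\<xi> - s*u) * cos (\<omega>*(t-u)))"
  have space: "(duhamel_transport f s \<omega> t has_real_derivative D) (at \<xi>)"
    unfolding duhamel_transport_convolution[abs_def] D_def
    using f' \<open>continuous_on UNIV f'\<close>
    by (rule has_real_derivative_integral_translates) (intro continuous_intros)
  have time: "((\<lambda>t. duhamel_transport f s \<omega> t \<xi>) has_real_derivative \<omega> * E) (at t)"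
    unfolding duhamel_transport_convolution E_def
    by (rule has_real_derivative_sine_convolution) fact
  have "\<omega> * E = heaviside t * f \<xi> * sin (\<omega>*t) - s * D"
  proof (cases "0 \<le> t")
    case True
    have "((\<lambda>u. \<xi> - s*u) has_real_derivative - s) (at u)" for u
      by (auto intro!: derivative_eq_intros)
    then have "((\<lambda>u. f (\<xi> - s*u)) has_real_derivative - s * f' (\<xi> - s*u)) (at u)" for u
      by (rule DERIV_cong[OF DERIV_chain2[OF f']]) simp
    from sine_convolution_integration_by_parts[OF this True, of \<omega>]
    have "- s * D = \<omega> * E - f \<xi> * sin (\<omega>*t)"
      unfolding D_def E_def by (simp add: mult.assoc)
    with True show ?thesis by (simp add: heaviside_def)
  qed (simp add: heaviside_def D_def E_def integral_atLeastAtMost_degenerate)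
  with space time show thesis by (intro that) auto
qed

type_synonym spacetime_field = "real \<Rightarrow> real \<Rightarrow> real \<Rightarrow> real \<Rightarrow> real"

definition linearized_euler_at ::
    "real \<Rightarrow> real \<Rightarrow> real \<Rightarrow> spacetime_field \<Rightarrow> spacetime_field \<Rightarrow> spacetime_field \<Rightarrow> spacetime_field \<Rightarrow>
     real \<Rightarrow> real \<Rightarrow> real \<Rightarrow> real \<Rightarrow> real \<Rightarrow> real \<Rightarrow> real \<Rightarrow> real \<Rightarrow> bool" where
  "linearized_euler_at U0 c0 \<rho>0 vx vy vz p t x y z F G H P \<longleftrightarrow>
    (\<exists>vxt vxx vyt vyx vyy vzt vzx vzz pt px py pz.
      has_pd_t vx t x y z vxt \<and> has_pd_x vx t x y z vxx \<and>
      has_pd_t vy t x y z vyt \<and> has_pd_x vy t x y z vyx \<and> has_pd_y vy t x y z vyy \<and>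
      has_pd_t vz t x y z vzt \<and> has_pd_x vz t x y z vzx \<and> has_pd_z vz t x y z vzz \<and>
      has_pd_t p t x y z pt \<and> has_pd_x p t x y z px \<and> has_pd_y p t x y z py \<and>
      has_pd_z p t x y z pz \<and>
      vxt + U0 * vxx + px / \<rho>0 = F \<and>
      vyt + U0 * vyx + py / \<rho>0 = G \<and>
      vzt + U0 * vzx + pz / \<rho>0 = H \<and>
      pt + U0 * px + \<rho>0 * c0\<^sup>2 * (vxx + vyy + vzz) = P)"

lemma linearized_euler_at_add:
  assumes "linearized_euler_at U0 c0 \<rho>0 vx vy vz p t x y z F G H P"
    and "linearized_euler_at U0 c0 \<rho>0 vx' vy' vz' p' t x y z F' G' H' P'"
  shows "linearized_euler_at U0 c0 \<rho>0
    (\<lambda>t x y z. vx t x y z + vx' t x y z) (\<lambda>t x y z. vy t x y z + vy' t x y z)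
    (\<lambda>t x y z. vz t x y z + vz' t x y z) (\<lambda>t x y z. p t x y z + p' t x y z)
    t x y z (F + F') (G + G') (H + H') (P + P')"
  using assms
  unfolding linearized_euler_at_def has_pd_t_def has_pd_x_def has_pd_y_def has_pd_z_def
  apply (elim exE conjE)
  apply (intro exI conjI)
  apply (rule DERIV_add; assumption)+
  apply (simp_all add: distrib_left add_divide_distrib)
  done

lemma plane_wave_partial_derivatives:
  fixes W :: "real \<Rightarrow> real \<Rightarrow> real"
  assumes space: "(W t has_real_derivative D) (at (k*x + l*y + m*z))"
    and time: "((\<lambda>t. W t (k*x + l*y + m*z)) has_real_derivative E) (at t)"
  shows "has_pd_t (\<lambda>t x y z. a * W t (k*x + l*y + m*z)) t x y z (a * E)"
    and "has_pd_x (\<lambda>t x y z. a * W t (k*x + l*y + m*z)) t x y z (a * D * k)"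
    and "has_pd_y (\<lambda>t x y z. a * W t (k*x + l*y + m*z)) t x y z (a * D * l)"
    and "has_pd_z (\<lambda>t x y z. a * W t (k*x + l*y + m*z)) t x y z (a * D * m)"
proof -
  have "((\<lambda>x'. k*x' + l*y + m*z) has_real_derivative k) (at x)"
    "((\<lambda>y'. k*x + l*y' + m*z) has_real_derivative l) (at y)"
    "((\<lambda>z'. k*x + l*y + m*z') has_real_derivative m) (at z)"
    by (auto intro!: derivative_eq_intros)
  note chain = this(1)[THEN DERIV_chain2[where f="W t" and g="\<lambda>x'. k*x' + l*y + m*z", OF space]]
    this(2)[THEN DERIV_chain2[where f="W t" and g="\<lambda>y'. k*x + l*y' + m*z", OF space]]
    this(3)[THEN DERIV_chain2[where f="W t" and g="\<lambda>z'. k*x + l*y + m*z'", OF space]]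
  from chain[THEN DERIV_cmult] time[THEN DERIV_cmult]
  show "has_pd_t (\<lambda>t x y z. a * W t (k*x + l*y + m*z)) t x y z (a * E)"
    and "has_pd_x (\<lambda>t x y z. a * W t (k*x + l*y + m*z)) t x y z (a * D * k)"
    and "has_pd_y (\<lambda>t x y z. a * W t (k*x + l*y + m*z)) t x y z (a * D * l)"
    and "has_pd_z (\<lambda>t x y z. a * W t (k*x + l*y + m*z)) t x y z (a * D * m)"
    by (simp_all add: has_pd_t_def has_pd_x_def has_pd_y_def has_pd_z_def mult.assoc)
qed

text \<open>The dispersion relation says that \<open>(a,b,c,d)\<close> is an eigenvector, with eigenvalue \<open>s\<close>,
  of the symbol of the system in the direction \<open>(k,l,m)\<close>.\<close>

lemma plane_wave_linearized_euler_at: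
  fixes W :: "real \<Rightarrow> real \<Rightarrow> real"
  assumes space: "(W t has_real_derivative D) (at (k*x + l*y + m*z))"
    and time: "((\<lambda>t. W t (k*x + l*y + m*z)) has_real_derivative R - s * D) (at t)"
    and dispersion: "a * (U0*k - s) + d * k / \<rho>0 = 0" "b * (U0*k - s) + d * l / \<rho>0 = 0"
      "c * (U0*k - s) + d * m / \<rho>0 = 0" "d * (U0*k - s) + \<rho>0 * c0\<^sup>2 * (a*k + b*l + c*m) = 0"
  shows "linearized_euler_at U0 c0 \<rho>0
    (\<lambda>t x y z. a * W t (k*x + l*y + m*z)) (\<lambda>t x y z. b * W t (k*x + l*y + m*z))
    (\<lambda>t x y z. c * W t (k*x + l*y + m*z)) (\<lambda>t x y z. d * W t (k*x + l*y + m*z))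
    t x y z (a * R) (b * R) (c * R) (d * R)"
proof -
  note partials = plane_wave_partial_derivatives[OF space time]
  have momentum_balance: "e * (R - s*D) + U0 * (e*D*k) + d*D*k'/\<rho>0 = e * R + D * (e * (U0*k - s) + d * k' / \<rho>0)" for e k'
    by (simp add: algebra_simps)
  have pressure_balance: "d * (R - s*D) + U0 * (d*D*k) + \<rho>0 * c0\<^sup>2 * (a*D*k + b*D*l + c*D*m)
      = d * R + D * (d * (U0*k - s) + \<rho>0 * c0\<^sup>2 * (a*k + b*l + c*m))"
    by (simp add: algebra_simps)
  show ?thesis
    unfolding linearized_euler_at_def
    by (intro exI conjI, (rule partials)+) (simp_all add: momentum_balance pressure_balance dispersion)
qed

lemma duhamel_plane_wave_linearized_euler_at:
  assumes "f C1_differentiable_on UNIV"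
    and "a * (U0*k - s) + d * k / \<rho>0 = 0" "b * (U0*k - s) + d * l / \<rho>0 = 0"
      "c * (U0*k - s) + d * m / \<rho>0 = 0" "d * (U0*k - s) + \<rho>0 * c0\<^sup>2 * (a*k + b*l + c*m) = 0"
  shows "linearized_euler_at U0 c0 \<rho>0
    (\<lambda>t x y z. a * duhamel_transport f s \<omega> t (k*x + l*y + m*z))
    (\<lambda>t x y z. b * duhamel_transport f s \<omega> t (k*x + l*y + m*z))
    (\<lambda>t x y z. c * duhamel_transport f s \<omega> t (k*x + l*y + m*z))
    (\<lambda>t x y z. d * duhamel_transport f s \<omega> t (k*x + l*y + m*z))
    t x y z (a * (heaviside t * f (k*x + l*y + m*z) * sin (\<omega>*t)))
    (b * (heaviside t * f (k*x + l*y + m*z) * sin (\<omega>*t)))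
    (c * (heaviside t * f (k*x + l*y + m*z) * sin (\<omega>*t)))
    (d * (heaviside t * f (k*x + l*y + m*z) * sin (\<omega>*t)))"
proof -
  obtain D where "(duhamel_transport f s \<omega> t has_real_derivative D) (at (k*x + l*y + m*z))"
    and "((\<lambda>t. duhamel_transport f s \<omega> t (k*x + l*y + m*z)) has_real_derivative
      heaviside t * f (k*x + l*y + m*z) * sin (\<omega>*t) - s * D) (at t)"
    using duhamel_transport_equation[OF assms(1)] .
  from plane_wave_linearized_euler_at[OF this assms(2-5)] show ?thesis .
qed

lemma duhamel_transport_superposition:
  fixes f1 f2 f3 f4 :: "real \<Rightarrow> real"
  assumes "continuous_on UNIV f1" "continuous_on UNIV f2" "continuous_on UNIV f3"
    "continuous_on UNIV f4"
  shows "heaviside t * integral {0..t} (\<lambda>\<tau>. (c1 * f1 (\<xi>1 - s1*(t-\<tau>)) + c2 * f2 (\<xi>2 - s2*(t-\<tau>))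
      + c3 * f3 (\<xi>3 - s3*(t-\<tau>)) + c4 * f4 (\<xi>4 - s4*(t-\<tau>))) * sin (\<omega>*\<tau>))
    = c1 * duhamel_transport f1 s1 \<omega> t \<xi>1 + c2 * duhamel_transport f2 s2 \<omega> t \<xi>2
      + c3 * duhamel_transport f3 s3 \<omega> t \<xi>3 + c4 * duhamel_transport f4 s4 \<omega> t \<xi>4"
proof -
  have int: "(\<lambda>\<tau>. c * (g (\<xi> - s*(t-\<tau>)) * sin (\<omega>*\<tau>))) integrable_on {0..t}"
    if "continuous_on UNIV g" for g c \<xi> s
    by (intro integrable_continuous_real continuous_intros continuous_on_compose2[OF that]) auto
  show ?thesis
    unfolding heaviside_mult_integral duhamel_transport_def distrib_right mult.assoc
    by (simp add: int assms integrable_add integral_add)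
qed

theorem proposition7:
  fixes U0 c0 \<rho>0 \<omega> :: real
    and f1 f2 f3 f4 :: "real \<Rightarrow> real"
    and k1 k2 k3 k4 l1 l2 l3 l4 m1 m2 m3 m4 :: real
    and r1 r2 :: real
    and a1 a2 a3 a4 :: "real \<Rightarrow> real \<Rightarrow> real \<Rightarrow> real \<Rightarrow> real \<Rightarrow> real"
    and vx vy vz p :: "real \<Rightarrow> real \<Rightarrow> real \<Rightarrow> real \<Rightarrow> real"
  assumes "U0 > 0" and "c0 > 0" and "\<rho>0 > 0"
    and "f1 C1_differentiable_on UNIV" and "f2 C1_differentiable_on UNIV"
    and "f3 C1_differentiable_on UNIV" and "f4 C1_differentiable_on UNIV"
    and "k3 * k4 \<noteq> 0"
    and "r1 = sqrt (k1\<^sup>2 + l1\<^sup>2 + m1\<^sup>2)"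
    and "r2 = sqrt (k2\<^sup>2 + l2\<^sup>2 + m2\<^sup>2)"
    and "\<And>t x y z \<tau>. a1 t x y z \<tau> = f1 (k1*x + l1*y + m1*z - (k1*U0 - c0*r1) * (t - \<tau>))"
    and "\<And>t x y z \<tau>. a2 t x y z \<tau> = f2 (k2*x + l2*y + m2*z - (k2*U0 + c0*r2) * (t - \<tau>))"
    and "\<And>t x y z \<tau>. a3 t x y z \<tau> = f3 (k3*x + l3*y + m3*z - k3*U0 * (t - \<tau>))"
    and "\<And>t x y z \<tau>. a4 t x y z \<tau> = f4 (k4*x + l4*y + m4*z - k4*U0 * (t - \<tau>))"
    and "\<And>t x y z. vx t x y z = heaviside t * integral {0..t} (\<lambda>\<tau>.
           (k1 * a1 t x y z \<tau> + k2 * a2 t x y z \<tau> + l3 / k3 * a3 t x y z \<tau>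
            + m4 / k4 * a4 t x y z \<tau>) * sin (\<omega> * \<tau>))"
    and "\<And>t x y z. vy t x y z = heaviside t * integral {0..t} (\<lambda>\<tau>.
           (l1 * a1 t x y z \<tau> + l2 * a2 t x y z \<tau> - a3 t x y z \<tau>) * sin (\<omega> * \<tau>))"
    and "\<And>t x y z. vz t x y z = heaviside t * integral {0..t} (\<lambda>\<tau>.
           (m1 * a1 t x y z \<tau> + m2 * a2 t x y z \<tau> - a4 t x y z \<tau>) * sin (\<omega> * \<tau>))"
    and "\<And>t x y z. p t x y z = heaviside t * integral {0..t} (\<lambda>\<tau>.
           (- c0 * \<rho>0 * r1 * a1 t x y z \<tau> + c0 * \<rho>0 * r2 * a2 t x y z \<tau>) * sin (\<omega> * \<tau>))"
  shows "\<forall>t x y z. \<exists>vxt vxx vyt vyx vyy vzt vzx vzz pt px py pz.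
     has_pd_t vx t x y z vxt \<and> has_pd_x vx t x y z vxx \<and>
     has_pd_t vy t x y z vyt \<and> has_pd_x vy t x y z vyx \<and> has_pd_y vy t x y z vyy \<and>
     has_pd_t vz t x y z vzt \<and> has_pd_x vz t x y z vzx \<and> has_pd_z vz t x y z vzz \<and>
     has_pd_t p t x y z pt \<and> has_pd_x p t x y z px \<and> has_pd_y p t x y z py \<and>
     has_pd_z p t x y z pz \<and>
     (let \<xi>1 = k1*x + l1*y + m1*z; \<xi>2 = k2*x + l2*y + m2*z;
          \<xi>3 = k3*x + l3*y + m3*z; \<xi>4 = k4*x + l4*y + m4*z;
          F = k1 * f1 \<xi>1 + k2 * f2 \<xi>2 + l3 / k3 * f3 \<xi>3 + m4 / k4 * f4 \<xi>4;
          G = l1 * f1 \<xi>1 + l2 * f2 \<xi>2 - f3 \<xi>3;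
          H = m1 * f1 \<xi>1 + m2 * f2 \<xi>2 - f4 \<xi>4;
          P = - c0 * \<rho>0 * r1 * f1 \<xi>1 + c0 * \<rho>0 * r2 * f2 \<xi>2
      in vxt + U0 * vxx + px / \<rho>0 = heaviside t * F * sin (\<omega> * t) \<and>
         vyt + U0 * vyx + py / \<rho>0 = heaviside t * G * sin (\<omega> * t) \<and>
         vzt + U0 * vzx + pz / \<rho>0 = heaviside t * H * sin (\<omega> * t) \<and>
         pt + U0 * px + \<rho>0 * c0\<^sup>2 * (vxx + vyy + vzz) = heaviside t * P * sin (\<omega> * t))"
proof -
  note C1 = assms(4-7)
  note cont = C1[THEN C1_differentiable_imp_continuous_on]
  have nonzero: "k3 \<noteq> 0" "k4 \<noteq> 0" "\<rho>0 \<noteq> 0"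
    using assms(3,8) by auto
  have radii: "r1 * r1 = k1 * k1 + l1 * l1 + m1 * m1" "r2 * r2 = k2 * k2 + l2 * l2 + m2 * m2"
    using assms(9,10) by (simp_all flip: power2_eq_square)
  let ?W1 = "duhamel_transport f1 (k1*U0 - c0*r1) \<omega>" and ?W2 = "duhamel_transport f2 (k2*U0 + c0*r2) \<omega>"
    and ?W3 = "duhamel_transport f3 (k3*U0) \<omega>" and ?W4 = "duhamel_transport f4 (k4*U0) \<omega>"
  let ?R = "\<lambda>f \<xi> t. heaviside t * f \<xi> * sin (\<omega>*t)"
  have fields: "vx = (\<lambda>t x y z. k1 * ?W1 t (k1*x + l1*y + m1*z) + k2 * ?W2 t (k2*x + l2*y + m2*z)
      + l3 / k3 * ?W3 t (k3*x + l3*y + m3*z) + m4 / k4 * ?W4 t (k4*x + l4*y + m4*z))"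
    "vy = (\<lambda>t x y z. l1 * ?W1 t (k1*x + l1*y + m1*z) + l2 * ?W2 t (k2*x + l2*y + m2*z)
      + -1 * ?W3 t (k3*x + l3*y + m3*z) + 0 * ?W4 t (k4*x + l4*y + m4*z))"
    "vz = (\<lambda>t x y z. m1 * ?W1 t (k1*x + l1*y + m1*z) + m2 * ?W2 t (k2*x + l2*y + m2*z)
      + 0 * ?W3 t (k3*x + l3*y + m3*z) + -1 * ?W4 t (k4*x + l4*y + m4*z))"
    "p = (\<lambda>t x y z. - c0 * \<rho>0 * r1 * ?W1 t (k1*x + l1*y + m1*z) + c0 * \<rho>0 * r2 * ?W2 t (k2*x + l2*y + m2*z)
      + 0 * ?W3 t (k3*x + l3*y + m3*z) + 0 * ?W4 t (k4*x + l4*y + m4*z))"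
    by (intro ext, subst duhamel_transport_superposition[OF cont, symmetric], simp add: assms(11-18))+
  have "linearized_euler_at U0 c0 \<rho>0 vx vy vz p t x y z
      (k1 * ?R f1 (k1*x + l1*y + m1*z) t + k2 * ?R f2 (k2*x + l2*y + m2*z) t
        + l3 / k3 * ?R f3 (k3*x + l3*y + m3*z) t + m4 / k4 * ?R f4 (k4*x + l4*y + m4*z) t)
      (l1 * ?R f1 (k1*x + l1*y + m1*z) t + l2 * ?R f2 (k2*x + l2*y + m2*z) t
        + -1 * ?R f3 (k3*x + l3*y + m3*z) t + 0 * ?R f4 (k4*x + l4*y + m4*z) t)
      (m1 * ?R f1 (k1*x + l1*y + m1*z) t + m2 * ?R f2 (k2*x + l2*y + m2*z) t
        + 0 * ?R f3 (k3*x + l3*y + m3*z) t + -1 * ?R f4 (k4*x + l4*y + m4*z) t)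
      (- c0 * \<rho>0 * r1 * ?R f1 (k1*x + l1*y + m1*z) t + c0 * \<rho>0 * r2 * ?R f2 (k2*x + l2*y + m2*z) t
        + 0 * ?R f3 (k3*x + l3*y + m3*z) t + 0 * ?R f4 (k4*x + l4*y + m4*z) t)" for t x y z
    unfolding fields
    by (intro linearized_euler_at_add duhamel_plane_wave_linearized_euler_at C1;
        simp add: nonzero radii field_simps power2_eq_square)
  then show ?thesis
    unfolding linearized_euler_at_def Let_def by (simp add: algebra_simps)
qed

end
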